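(* There exists $\varepsilon_0>0$ such that for every $\varepsilon\in(0,\varepsilon_0)$ the following holds. Let $\mathbf{U}$ be the $7\times 7$ matrix $$\mathbf{U}=\begin{pmatrix} 0 & -1 & \varepsilon & -10 & -\tfrac13+\varepsilon & -\tfrac13+\varepsilon & -\tfrac13+\varepsilon\\ \varepsilon & 0 & -1 & -10 & -\tfrac13+\varepsilon & -\tfrac13+\varepsilon & -\tfrac13+\varepsilon\\ -1 & \varepsilon & 0 & -10 & -\tfrac13+\varepsilon & -\tfrac13+\varepsilon & -\tfrac13+\varepsilon\\ -2 & -2 & 2 & 0 & -\tfrac13 & -\tfrac13 & -\tfrac13\\ -\tfrac13 & -\tfrac13 & -\tfrac13 & 10 & 0 & -1 & \varepsilon\\ -\tfrac13 & -\tfrac13 & -\tfrac13 & 10 & \varepsilon & 0 & -1\\ -\tfrac13 & -\tfrac13 & -\tfrac13 & 10 & -1 & \varepsilon & 0 \end{pmatrix},\qquad \bar{\mathbf{U}}=\begin{pmatrix} 0 & -1 & \varepsilon\\ \varepsilon & 0 & -1\\ -1 & \varepsilon & 0\end{pmatrix}.$$ Let $\mathbf{x}(\cdot):\mathbb{R}\to S_7$ be an interior solution (i.e. $x_i(t)>0$ for all $i$ and all $t\in\mathbb{R}$) of the replicator dynamics $\dot x_i=x_i[(\mathbf{U}\mathbf{x})_i-\mathbf{x}\cdot\mathbf{U}\mathbf{x}]$. Set $\lambda(t)=x_1(t)+x_2(t)+x_3(t)$, $\bar x_i=x_i/\lambda$ for $i=1,2,3$, $\bar{\mathbf{x}}=(\bar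 x_1,\bar x_2,\bar x_3)$ and $\bar\tau(t)=\int_0^t\lambda(s)\,ds$. Let $\mathbf{y}(\cdot)$ be the solution of the replicator dynamics $\dot y_i=y_i[(\bar{\mathbf{U}}\mathbf{y})_i-\mathbf{y}\cdot\bar{\mathbf{U}}\mathbf{y}]$ on $S_3$ with $\mathbf{y}(0)=\bar{\mathbf{x}}(0)$. Then $$\dot{\bar x}_i=\lambda\,\bar x_i\big[(\bar{\mathbf{U}}\bar{\mathbf{x}})_i-\bar{\mathbf{x}}\cdot\bar{\mathbf{U}}\bar{\mathbf{x}}\big]\quad (i=1,2,3),$$ and $\bar{\mathbf{x}}(t)=\mathbf{y}(\bar\tau(t))$ for all $t\in\mathbb{R}$.
   Context: $S_n=\{\mathbf{x}\in\mathbb{R}_+^n:\sum_i x_i=1\}$. The paper assumes throughout that $\varepsilon>0$ is "small enough". *)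

theory Defs
  imports "HOL-Analysis.Analysis"
begin

text \<open>Vectors in R^n are rendered as functions nat => real, using the indices 1..n.\<close>

definition in_simplex :: "nat \<Rightarrow> (nat \<Rightarrow> real) \<Rightarrow> bool" where
  "in_simplex n v \<longleftrightarrow> (\<forall>i\<in>{1..n}. 0 \<le> v i) \<and> (\<Sum>i=1..n. v i) = 1"

definition matvec :: "nat \<Rightarrow> (nat \<Rightarrow> nat \<Rightarrow> real) \<Rightarrow> (nat \<Rightarrow> real) \<Rightarrow> nat \<Rightarrow> real" where
  "matvec n A v i = (\<Sum>j=1..n. A i j * v j)"

definition dotp :: "nat \<Rightarrow> (nat \<Rightarrow> real) \<Rightarrow> (nat \<Rightarrow> real) \<Rightarrow> real" where
  "dotp n v w = (\<Sum>i=1..n. v i * w i)"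

definition replicator_solution :: "nat \<Rightarrow> (nat \<Rightarrow> nat \<Rightarrow> real) \<Rightarrow> (real \<Rightarrow> nat \<Rightarrow> real) \<Rightarrow> bool" where
  "replicator_solution n A x \<longleftrightarrow>
     (\<forall>t. \<forall>i\<in>{1..n}. ((\<lambda>s. x s i) has_real_derivative
        x t i * (matvec n A (x t) i - dotp n (x t) (matvec n A (x t)))) (at t))"

definition Umat :: "real \<Rightarrow> nat \<Rightarrow> nat \<Rightarrow> real" where
  "Umat e i j =
    [[0, -1, e, -10, -1/3+e, -1/3+e, -1/3+e],
     [e, 0, -1, -10, -1/3+e, -1/3+e, -1/3+e],
     [-1, e, 0, -10, -1/3+e, -1/3+e, -1/3+e],
     [-2, -2, 2, 0, -1/3, -1/3, -1/3],
     [-1/3, -1/3, -1/3, 10, 0, -1, e],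
     [-1/3, -1/3, -1/3, 10, e, 0, -1],
     [-1/3, -1/3, -1/3, 10, -1, e, 0]] ! (i - 1) ! (j - 1)"

definition Ubar :: "real \<Rightarrow> nat \<Rightarrow> nat \<Rightarrow> real" where
  "Ubar e i j = [[0, -1, e], [e, 0, -1], [-1, e, 0]] ! (i - 1) ! (j - 1)"

definition lam :: "(real \<Rightarrow> nat \<Rightarrow> real) \<Rightarrow> real \<Rightarrow> real" where
  "lam x t = x t 1 + x t 2 + x t 3"

definition xbar :: "(real \<Rightarrow> nat \<Rightarrow> real) \<Rightarrow> real \<Rightarrow> nat \<Rightarrow> real" where
  "xbar x t i = x t i / lam x t"

text \<open>Signed integral from 0 to t (negative orientation for t < 0).\<close>
definition taubar :: "(real \<Rightarrow> nat \<Rightarrow> real) \<Rightarrow> real \<Rightarrow> real" where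
  "taubar x t = (LBINT s=0..t. lam x s)"

end

theory Submission
  imports Defs
begin

(* For i <= 3 the i-th row of U is Ubar on the first block and constant on the remaining
   columns, so (U x)_i = lam * (Ubar xbar)_i + c with c independent of i.  After
   normalizing by lam the common term c cancels against the mean payoff, leaving
   xbar' = lam * F(xbar) with F the replicator field of Ubar.  Since taubar' = lam, the
   chain rule gives the same equation for t -> y(taubar t).  Both curves stay in the
   simplex, where F is Lipschitz, so their squared distance w satisfies |w'| <= K w and
   w(0) = 0; Gronwall's inequality forces w = 0. *)

definition replicator_field :: "nat \<Rightarrow> (nat \<Rightarrow> nat \<Rightarrow> real) \<Rightarrow> (nat \<Rightarrow> real) \<Rightarrow> nat \<Rightarrow> real" where
  "replicator_field n A v i = v i * (matvec n A v i - dotp n v (matvec n A v))"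

lemma gronwall_zero_forward:
  fixes w w' :: "real \<Rightarrow> real"
  assumes deriv: "\<And>s. (w has_real_derivative w' s) (at s)"
    and growth: "\<And>s. w' s \<le> L * w s" and nonneg: "\<And>s. 0 \<le> w s" and start: "w 0 = 0"
    and "0 \<le> t"
  shows "w t = 0"
proof -
  have "w t * exp (- L * t) \<le> w 0 * exp (- L * 0)"
  proof (rule DERIV_nonpos_imp_nonincreasing[OF \<open>0 \<le> t\<close>, where f = "\<lambda>s. w s * exp (- L * s)"])
    fix s
    have "((\<lambda>s. w s * exp (- L * s)) has_real_derivative (w' s - L * w s) * exp (- L * s)) (at s)"
      by (auto intro!: derivative_eq_intros deriv simp: algebra_simps)
    moreover have "(w' s - L * w s) * exp (- L * s) \<le> 0"
      using growth[of s] by (simp add: mult_nonpos_nonneg)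
    ultimately show "\<exists>y. ((\<lambda>s. w s * exp (- L * s)) has_real_derivative y) (at s) \<and> y \<le> 0"
      by blast
  qed
  then have "w t \<le> 0"
    using start by (simp add: mult_le_0_iff)
  with nonneg[of t] show ?thesis
    by simp
qed

lemma gronwall_zero:
  fixes w w' :: "real \<Rightarrow> real"
  assumes deriv: "\<And>s. (w has_real_derivative w' s) (at s)"
    and growth: "\<And>s. \<bar>w' s\<bar> \<le> L * w s" and nonneg: "\<And>s. 0 \<le> w s" and start: "w 0 = 0"
  shows "w t = 0"
proof (cases "0 \<le> t")
  case True
  show ?thesis
    using gronwall_zero_forward[OF deriv _ nonneg start True] growth abs_le_iff by blast
next
  case False
  have "w (- (- t)) = 0"
  proof (rule gronwall_zero_forward[where w = "\<lambda>s. w (- s)" and w' = "\<lambda>s. - w' (- s)" and L = L])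
    show "((\<lambda>s. w (- s)) has_real_derivative - w' (- s)) (at s)" for s
      using DERIV_chain2[OF deriv DERIV_minus[OF DERIV_ident]] by simp
    show "- w' (- s) \<le> L * w (- s)" for s
      using growth[of "- s"] by linarith
  qed (use nonneg start False in auto)
  then show ?thesis
    by simp
qed

lemma interval_integral_has_real_derivative:
  fixes f :: "real \<Rightarrow> real"
  assumes "continuous_on UNIV f"
  shows "((\<lambda>u. LBINT s=0..u. f s) has_real_derivative f t) (at t)"
proof -
  let ?I = "{min t 0 - 1 .. max t 0 + 1}"
  have "((\<lambda>u. LBINT s=0..u. f s) has_vector_derivative f t) (at t within ?I)"
    using interval_integral_FTC2[of "min t 0 - 1" 0 "max t 0 + 1" f t]
      continuous_on_subset[OF assms, of ?I]
    by (simp add: zero_ereal_def)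
  moreover have "t \<in> interior ?I"
    by auto
  ultimately show ?thesis
    by (metis at_within_interior has_real_derivative_iff_has_vector_derivative)
qed

lemma matvec_eq_dotp: "matvec n A v i = dotp n v (A i)"
  by (simp add: matvec_def dotp_def mult.commute)

lemma matvec_diff: "matvec n A v i - matvec n A u i = matvec n A (\<lambda>j. v j - u j) i"
  by (simp add: matvec_def sum_subtractf right_diff_distrib)

lemma matvec_scale: "matvec n A (\<lambda>j. l * v j) i = l * matvec n A v i"
  by (simp add: matvec_def sum_distrib_left algebra_simps)

lemma dotp_affine:
  assumes "(\<Sum>j=1..n. v j) = 1"
  shows "dotp n v (\<lambda>j. l * h j + c) = l * dotp n v h + c"
proof -
  have "dotp n v (\<lambda>j. l * h j + c) = l * dotp n v h + c * (\<Sum>j=1..n. v j)"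
    by (simp add: dotp_def sum.distrib sum_distrib_left algebra_simps)
  with assms show ?thesis
    by simp
qed

lemma abs_dotp_le:
  assumes "\<And>j. j \<in> {1..n} \<Longrightarrow> \<bar>w j\<bar> \<le> W"
  shows "\<bar>dotp n v w\<bar> \<le> (\<Sum>j=1..n. \<bar>v j\<bar>) * W"
proof -
  have "\<bar>dotp n v w\<bar> \<le> (\<Sum>j=1..n. \<bar>v j * w j\<bar>)"
    unfolding dotp_def by (rule sum_abs)
  also have "\<dots> \<le> (\<Sum>j=1..n. \<bar>v j\<bar> * W)"
    using assms by (intro sum_mono) (auto simp: abs_mult intro!: mult_left_mono)
  finally show ?thesis
    by (simp add: sum_distrib_right)
qed

lemma abs_dotp_le_unit:
  assumes "\<And>j. j \<in> {1..n} \<Longrightarrow> \<bar>w j\<bar> \<le> W" and "0 \<le> W" and "(\<Sum>j=1..n. \<bar>v j\<bar>) \<le> 1"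
  shows "\<bar>dotp n v w\<bar> \<le> W"
  using abs_dotp_le[of n w W v, OF assms(1)] mult_right_mono[OF assms(3,2)] by simp

lemma abs_mult_diff_le:
  fixes p q p' q' B C :: real
  assumes "\<bar>q\<bar> \<le> B" "\<bar>p'\<bar> \<le> C"
  shows "\<bar>p * q - p' * q'\<bar> \<le> \<bar>p - p'\<bar> * B + C * \<bar>q - q'\<bar>"
proof -
  have "\<bar>p * q - p' * q'\<bar> = \<bar>(p - p') * q + p' * (q - q')\<bar>"
    by (simp add: algebra_simps)
  also have "\<dots> \<le> \<bar>p - p'\<bar> * \<bar>q\<bar> + \<bar>p'\<bar> * \<bar>q - q'\<bar>"
    by (metis abs_mult abs_triangle_ineq)
  also have "\<dots> \<le> \<bar>p - p'\<bar> * B + C * \<bar>q - q'\<bar>"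
    using assms by (intro add_mono mult_mono) auto
  finally show ?thesis .
qed

lemma abs_dotp_diff_le:
  assumes "\<And>j. j \<in> {1..n} \<Longrightarrow> \<bar>w j\<bar> \<le> W" and "\<And>j. j \<in> {1..n} \<Longrightarrow> \<bar>w j - z j\<bar> \<le> E"
    and "0 \<le> E" and "(\<Sum>j=1..n. \<bar>u j\<bar>) \<le> 1"
  shows "\<bar>dotp n v w - dotp n u z\<bar> \<le> W * (\<Sum>j=1..n. \<bar>v j - u j\<bar>) + E"
proof -
  have "\<bar>dotp n v w - dotp n u z\<bar> \<le> (\<Sum>j=1..n. \<bar>v j * w j - u j * z j\<bar>)"
    unfolding dotp_def by (metis (no_types) sum_abs sum_subtractf)
  also have "\<dots> \<le> (\<Sum>j=1..n. \<bar>v j - u j\<bar> * W + \<bar>u j\<bar> * E)"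
  proof (rule sum_mono)
    fix j assume "j \<in> {1..n}"
    then have "\<bar>v j * w j - u j * z j\<bar> \<le> \<bar>v j - u j\<bar> * W + \<bar>u j\<bar> * \<bar>w j - z j\<bar>"
      using assms(1) by (intro abs_mult_diff_le) auto
    also have "\<dots> \<le> \<bar>v j - u j\<bar> * W + \<bar>u j\<bar> * E"
      using assms(2) \<open>j \<in> {1..n}\<close> by (simp add: mult_left_mono)
    finally show "\<bar>v j * w j - u j * z j\<bar> \<le> \<bar>v j - u j\<bar> * W + \<bar>u j\<bar> * E" .
  qed
  also have "\<dots> = W * (\<Sum>j=1..n. \<bar>v j - u j\<bar>) + E * (\<Sum>j=1..n. \<bar>u j\<bar>)"
    by (simp add: sum.distrib sum_distrib_left mult.commute)
  also have "\<dots> \<le> W * (\<Sum>j=1..n. \<bar>v j - u j\<bar>) + E"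
    using assms(3,4) by (simp add: mult_left_le)
  finally show ?thesis .
qed

lemma replicator_field_lipschitz:
  assumes A: "\<And>i j. i \<in> {1..n} \<Longrightarrow> j \<in> {1..n} \<Longrightarrow> \<bar>A i j\<bar> \<le> b" and "0 \<le> b"
    and v: "(\<Sum>j=1..n. \<bar>v j\<bar>) \<le> 1" and u: "(\<Sum>j=1..n. \<bar>u j\<bar>) \<le> 1" and i: "i \<in> {1..n}"
  shows "\<bar>replicator_field n A v i - replicator_field n A u i\<bar> \<le> 5 * b * (\<Sum>j=1..n. \<bar>v j - u j\<bar>)"
proof -
  define D where "D = (\<Sum>j=1..n. \<bar>v j - u j\<bar>)"
  define Mv Mu where "Mv = matvec n A v" and "Mu = matvec n A u"
  define Qv Qu where "Qv = dotp n v Mv" and "Qu = dotp n u Mu"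
  have "0 \<le> D"
    unfolding D_def by (simp add: sum_nonneg)
  have M_bound: "\<bar>matvec n A z j\<bar> \<le> b" if "(\<Sum>j=1..n. \<bar>z j\<bar>) \<le> 1" "j \<in> {1..n}" for z j
    unfolding matvec_eq_dotp using A that \<open>0 \<le> b\<close> by (intro abs_dotp_le_unit) auto
  have M_diff: "\<bar>Mv j - Mu j\<bar> \<le> D * b" if "j \<in> {1..n}" for j
    unfolding Mv_def Mu_def D_def matvec_diff unfolding matvec_eq_dotp
    using A that by (intro abs_dotp_le) auto
  have Q_bound: "\<bar>Qv\<bar> \<le> b"
    unfolding Qv_def Mv_def using M_bound[OF v] \<open>0 \<le> b\<close> v by (intro abs_dotp_le_unit)
  have "\<bar>dotp n v Mv - dotp n u Mu\<bar> \<le> b * (\<Sum>j=1..n. \<bar>v j - u j\<bar>) + D * b"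
    by (rule abs_dotp_diff_le) (use M_bound[OF v] M_diff u \<open>0 \<le> b\<close> \<open>0 \<le> D\<close> in \<open>auto simp: Mv_def\<close>)
  then have Q_diff: "\<bar>Qv - Qu\<bar> \<le> b * D + D * b"
    unfolding Qv_def Qu_def D_def .
  have "\<bar>v i - u i\<bar> \<le> D"
    unfolding D_def using i by (intro member_le_sum) auto
  have "\<bar>u i\<bar> \<le> 1"
    using member_le_sum[of i "{1..n}" "\<lambda>j. \<bar>u j\<bar>"] i u by auto
  have "\<bar>v i * (Mv i - Qv) - u i * (Mu i - Qu)\<bar> \<le> \<bar>v i - u i\<bar> * (2 * b) + 1 * \<bar>(Mv i - Qv) - (Mu i - Qu)\<bar>"
    using M_bound[OF v i] Q_bound \<open>\<bar>u i\<bar> \<le> 1\<close> unfolding Mv_def by (intro abs_mult_diff_le) auto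
  also have "\<dots> \<le> D * (2 * b) + (D * b + (b * D + D * b))"
    using \<open>\<bar>v i - u i\<bar> \<le> D\<close> \<open>0 \<le> b\<close> M_diff[OF i] Q_diff
    by (smt (verit) mult_right_mono)
  also have "\<dots> = 5 * b * D"
    by (simp add: algebra_simps)
  finally show ?thesis
    unfolding replicator_field_def D_def Mv_def Mu_def Qv_def Qu_def .
qed

lemma abs_sum_mult_le_sum_squares:
  fixes d F :: "nat \<Rightarrow> real"
  assumes F: "\<And>j. j \<in> {1..n} \<Longrightarrow> \<bar>F j\<bar> \<le> K * (\<Sum>j=1..n. \<bar>d j\<bar>)" and "0 \<le> K"
  shows "\<bar>\<Sum>j=1..n. 2 * d j * F j\<bar> \<le> 2 * K * real n * (\<Sum>j=1..n. (d j)\<^sup>2)"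
proof -
  define D where "D = (\<Sum>j=1..n. \<bar>d j\<bar>)"
  have "\<bar>\<Sum>j=1..n. 2 * d j * F j\<bar> \<le> (\<Sum>j=1..n. \<bar>d j\<bar> * (2 * (K * D)))"
  proof (rule order_trans[OF sum_abs], rule sum_mono)
    fix j assume "j \<in> {1..n}"
    have "\<bar>2 * d j * F j\<bar> = \<bar>d j\<bar> * (2 * \<bar>F j\<bar>)"
      by (simp add: abs_mult)
    also have "\<dots> \<le> \<bar>d j\<bar> * (2 * (K * D))"
      using F[OF \<open>j \<in> {1..n}\<close>] by (intro mult_left_mono) (simp_all add: D_def)
    finally show "\<bar>2 * d j * F j\<bar> \<le> \<bar>d j\<bar> * (2 * (K * D))" .
  qed
  also have "\<dots> = D * (2 * (K * D))"
    unfolding D_def by (rule sum_distrib_right[symmetric])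
  also have "\<dots> = 2 * K * D\<^sup>2"
    by (simp add: power2_eq_square)
  also have "\<dots> \<le> 2 * K * ((\<Sum>j=1..n. (d j)\<^sup>2) * real n)"
    using sum_squared_le_sum_of_squares[of "\<lambda>j. \<bar>d j\<bar>" "{1..n}"] \<open>0 \<le> K\<close>
    by (intro mult_left_mono) (auto simp: D_def)
  finally show ?thesis
    by (simp add: algebra_simps)
qed

lemma time_changed_replicator_unique:
  fixes a c :: "real \<Rightarrow> nat \<Rightarrow> real" and l :: "real \<Rightarrow> real"
  assumes a_deriv: "\<And>t j. j \<in> {1..n} \<Longrightarrow>
      ((\<lambda>s. a s j) has_real_derivative l t * replicator_field n A (a t) j) (at t)"
    and c_deriv: "\<And>t j. j \<in> {1..n} \<Longrightarrow>
      ((\<lambda>s. c s j) has_real_derivative l t * replicator_field n A (c t) j) (at t)"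
    and l_bound: "\<And>t. \<bar>l t\<bar> \<le> L"
    and A: "\<And>i j. i \<in> {1..n} \<Longrightarrow> j \<in> {1..n} \<Longrightarrow> \<bar>A i j\<bar> \<le> b" and "0 \<le> b"
    and a_ball: "\<And>t. (\<Sum>j=1..n. \<bar>a t j\<bar>) \<le> 1" and c_ball: "\<And>t. (\<Sum>j=1..n. \<bar>c t j\<bar>) \<le> 1"
    and start: "\<And>j. j \<in> {1..n} \<Longrightarrow> a 0 j = c 0 j"
    and i: "i \<in> {1..n}"
  shows "a t i = c t i"
proof -
  define d where "d s j = a s j - c s j" for s j
  define F where "F s j = l s * (replicator_field n A (a s) j - replicator_field n A (c s) j)" for s j
  define w where "w s = (\<Sum>j=1..n. (d s j)\<^sup>2)" for s
  define w' where "w' s = (\<Sum>j=1..n. 2 * d s j * F s j)" for s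
  have w_deriv: "(w has_real_derivative w' s) (at s)" for s
    unfolding w_def w'_def d_def F_def
    by (rule DERIV_sum) (auto intro!: derivative_eq_intros a_deriv c_deriv simp: algebra_simps)
  have "0 \<le> L"
    using l_bound[of 0] by linarith
  have w_growth: "\<bar>w' s\<bar> \<le> 2 * (L * (5 * b)) * real n * w s" for s
    unfolding w'_def w_def
  proof (rule abs_sum_mult_le_sum_squares)
    fix j assume "j \<in> {1..n}"
    have "\<bar>F s j\<bar> \<le> L * (5 * b * (\<Sum>j=1..n. \<bar>d s j\<bar>))"
      unfolding F_def d_def abs_mult
      using l_bound[of s] replicator_field_lipschitz[OF A \<open>0 \<le> b\<close> a_ball c_ball \<open>j \<in> {1..n}\<close>] \<open>0 \<le> L\<close>
      by (rule mult_mono) simp_all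
    then show "\<bar>F s j\<bar> \<le> L * (5 * b) * (\<Sum>j=1..n. \<bar>d s j\<bar>)"
      by (simp only: mult.assoc)
  qed (use \<open>0 \<le> L\<close> \<open>0 \<le> b\<close> in simp)
  have "w t = 0"
    by (rule gronwall_zero[OF w_deriv w_growth]) (auto simp: w_def d_def start sum_nonneg)
  then have "d t i = 0"
    using i by (simp add: w_def sum_nonneg_eq_0_iff)
  then show ?thesis
    by (simp add: d_def)
qed

lemma normalized_block_has_derivative:
  fixes x :: "real \<Rightarrow> nat \<Rightarrow> real" and g :: "nat \<Rightarrow> real"
  assumes x_deriv: "\<And>j. j \<in> {1..m} \<Longrightarrow> ((\<lambda>s. x s j) has_real_derivative x t j * (g j - P)) (at t)"
    and nonzero: "(\<Sum>j=1..m. x t j) \<noteq> 0" and i: "i \<in> {1..m}"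
  defines "v \<equiv> \<lambda>j. x t j / (\<Sum>j=1..m. x t j)"
  shows "((\<lambda>s. x s i / (\<Sum>j=1..m. x s j)) has_real_derivative v i * (g i - dotp m v g)) (at t)"
proof -
  define S where "S = (\<Sum>j=1..m. x t j)"
  define G where "G = (\<Sum>j=1..m. x t j * g j)"
  have "((\<lambda>s. \<Sum>j=1..m. x s j) has_real_derivative (\<Sum>j=1..m. x t j * (g j - P))) (at t)"
    by (rule DERIV_sum) (rule x_deriv)
  moreover have "(\<Sum>j=1..m. x t j * (g j - P)) = G - S * P"
    by (simp add: G_def S_def right_diff_distrib sum_subtractf sum_distrib_right)
  ultimately have S_deriv: "((\<lambda>s. \<Sum>j=1..m. x s j) has_real_derivative G - S * P) (at t)"
    by simp
  have deriv: "((\<lambda>s. x s i / (\<Sum>j=1..m. x s j)) has_real_derivative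
      (x t i * (g i - P) * S - x t i * (G - S * P)) / (S * S)) (at t)"
    using DERIV_divide[OF x_deriv[OF i] S_deriv nonzero] by (simp add: S_def)
  have v_eq: "v = (\<lambda>j. x t j / S)"
    by (simp add: v_def S_def)
  have dotp_eq: "dotp m (\<lambda>j. x t j / S) g = G / S"
    by (simp add: G_def dotp_def sum_divide_distrib)
  have "(x t i * (g i - P) * S - x t i * (G - S * P)) / (S * S) = v i * (g i - dotp m v g)"
    unfolding v_eq dotp_eq using nonzero[folded S_def] by (simp add: field_simps)
  with deriv show ?thesis
    by simp
qed

lemma matvec_Umat_first_block:
  "i \<in> {1..3} \<Longrightarrow>
    matvec 7 (Umat e) v i = matvec 3 (Ubar e) v i + (- 10 * v 4 + (- 1/3 + e) * (v 5 + v 6 + v 7))"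
  by (auto simp: matvec_def Umat_def Ubar_def numeral_eq_Suc atLeastAtMostSuc_conv algebra_simps)

lemma abs_Ubar_le: "\<bar>e\<bar> \<le> 1 \<Longrightarrow> i \<in> {1..3} \<Longrightarrow> j \<in> {1..3} \<Longrightarrow> \<bar>Ubar e i j\<bar> \<le> 1"
  by (auto simp: Ubar_def numeral_eq_Suc atLeastAtMostSuc_conv)

lemma lam_eq_sum: "lam x t = (\<Sum>j=1..3. x t j)"
  by (simp add: lam_def numeral_eq_Suc atLeastAtMostSuc_conv)

lemma lam_pos: "(\<And>j. j \<in> {1..3} \<Longrightarrow> 0 < x t j) \<Longrightarrow> 0 < lam x t"
  unfolding lam_eq_sum by (rule sum_pos) auto

lemma lam_le_one:
  assumes "in_simplex 7 (x t)" and "\<And>j. j \<in> {1..7} \<Longrightarrow> 0 < x t j"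
  shows "lam x t \<le> 1"
proof -
  have "lam x t \<le> (\<Sum>j=1..7. x t j)"
    unfolding lam_eq_sum using assms(2) by (intro sum_mono2) (auto intro: less_imp_le)
  with assms(1) show ?thesis
    by (simp add: in_simplex_def)
qed

lemma in_simplex_xbar:
  assumes "\<And>j. j \<in> {1..3} \<Longrightarrow> 0 < x t j"
  shows "in_simplex 3 (xbar x t)"
  using lam_pos[of x t] assms
  by (auto simp: in_simplex_def xbar_def lam_eq_sum simp flip: sum_divide_distrib intro: less_imp_le)

lemma in_simplex_abs_sum: "in_simplex n v \<Longrightarrow> (\<Sum>j=1..n. \<bar>v j\<bar>) = 1"
  unfolding in_simplex_def by (metis (mono_tags, lifting) abs_of_nonneg sum.cong)

lemma xbar_has_derivative:
  assumes pos: "\<And>j. j \<in> {1..3} \<Longrightarrow> 0 < x t j" and sol: "replicator_solution 7 (Umat e) x"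
    and i: "i \<in> {1..3}"
  shows "((\<lambda>s. xbar x s i) has_real_derivative lam x t * xbar x t i * (matvec 3 (Ubar e) (xbar x t) i
      - dotp 3 (xbar x t) (matvec 3 (Ubar e) (xbar x t)))) (at t)"
proof -
  define g where "g = matvec 7 (Umat e) (x t)"
  define M where "M = matvec 3 (Ubar e) (xbar x t)"
  define c where "c = - 10 * x t 4 + (- 1/3 + e) * (x t 5 + x t 6 + x t 7)"
  have "0 < lam x t"
    using pos by (rule lam_pos)
  have "x t = (\<lambda>j. lam x t * xbar x t j)"
    using \<open>0 < lam x t\<close> by (auto simp: xbar_def)
  then have g_block: "g j = lam x t * M j + c" if "j \<in> {1..3}" for j
    using matvec_Umat_first_block[OF that, of e "x t"] matvec_scale[of 3 "Ubar e" "lam x t" "xbar x t" j]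
    by (simp add: g_def M_def c_def)
  have "dotp 3 (xbar x t) g = dotp 3 (xbar x t) (\<lambda>j. lam x t * M j + c)"
    unfolding dotp_def using g_block by (intro sum.cong) auto
  also have "\<dots> = lam x t * dotp 3 (xbar x t) M + c"
    using in_simplex_xbar[of x t, OF pos] by (intro dotp_affine) (simp add: in_simplex_def)
  finally have g_mean: "dotp 3 (xbar x t) g = lam x t * dotp 3 (xbar x t) M + c" .
  have "((\<lambda>s. x s i / lam x s) has_real_derivative xbar x t i * (g i - dotp 3 (xbar x t) g)) (at t)"
    using normalized_block_has_derivative[of 3 x t g "dotp 7 (x t) g" i] sol \<open>0 < lam x t\<close> i
    by (simp add: replicator_solution_def g_def lam_eq_sum xbar_def[abs_def])
  then show ?thesis
    unfolding xbar_def[of x _ i, symmetric] g_mean g_block[OF i] M_def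
    by (simp add: algebra_simps)
qed

lemma xbar_eq_time_changed_solution:
  assumes x_pos: "\<And>t j. j \<in> {1..7} \<Longrightarrow> 0 < x t j" and x_simplex: "\<And>t. in_simplex 7 (x t)"
    and x_sol: "replicator_solution 7 (Umat e) x"
    and y_simplex: "\<And>t. in_simplex 3 (y t)" and y_sol: "replicator_solution 3 (Ubar e) y"
    and start: "\<And>j. j \<in> {1..3} \<Longrightarrow> y 0 j = xbar x 0 j"
    and "\<bar>e\<bar> \<le> 1" and i: "i \<in> {1..3}"
  shows "xbar x t i = y (taubar x t) i"
proof (rule time_changed_replicator_unique[where a = "xbar x" and c = "\<lambda>s. y (taubar x s)"
      and n = 3 and l = "lam x" and L = 1 and A = "Ubar e" and b = 1])
  have x_pos3: "\<And>t j. j \<in> {1..3} \<Longrightarrow> 0 < x t j"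
    using x_pos by auto
  show "((\<lambda>s. xbar x s j) has_real_derivative lam x t * replicator_field 3 (Ubar e) (xbar x t) j) (at t)"
    if "j \<in> {1..3}" for t j
    using xbar_has_derivative[OF x_pos3 x_sol that] by (simp add: replicator_field_def mult.assoc)
  have "isCont (lam x) t" for t
  proof -
    have "isCont (\<lambda>s. x s j) t" if "j \<in> {1..7}" for j
      using x_sol that unfolding replicator_solution_def by (blast intro: DERIV_isCont)
    then show ?thesis
      unfolding lam_def[abs_def] by (intro continuous_intros) auto
  qed
  then have taubar_deriv: "(taubar x has_real_derivative lam x t) (at t)" for t
    unfolding taubar_def[abs_def]
    by (intro interval_integral_has_real_derivative continuous_at_imp_continuous_on) auto
  show "((\<lambda>s. y (taubar x s) j) has_real_derivative
      lam x t * replicator_field 3 (Ubar e) (y (taubar x t)) j) (at t)" if "j \<in> {1..3}" for t j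
  proof -
    have "((\<lambda>s. y s j) has_real_derivative replicator_field 3 (Ubar e) (y (taubar x t)) j)
        (at (taubar x t))"
      using y_sol that unfolding replicator_solution_def replicator_field_def by blast
    from DERIV_chain2[OF this taubar_deriv] show ?thesis
      by (simp add: mult.commute)
  qed
  show "\<bar>lam x t\<bar> \<le> 1" for t
    using lam_pos[of x t, OF x_pos3] lam_le_one[OF x_simplex x_pos] by simp
  show "(\<Sum>j=1..3. \<bar>xbar x t j\<bar>) \<le> 1" for t
    using in_simplex_abs_sum[OF in_simplex_xbar[of x t, OF x_pos3]] by simp
  show "(\<Sum>j=1..3. \<bar>y t j\<bar>) \<le> 1" for t
    using in_simplex_abs_sum[OF y_simplex] by simp
  show "xbar x 0 j = y (taubar x 0) j" if "j \<in> {1..3}" for j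
    using start[OF that] by (simp add: taubar_def zero_ereal_def)
qed (use abs_Ubar_le[OF \<open>\<bar>e\<bar> \<le> 1\<close>] i in auto)

theorem lemma3:
  shows "\<exists>e0>0. \<forall>e. 0 < e \<and> e < e0 \<longrightarrow>
    (\<forall>(x :: real \<Rightarrow> nat \<Rightarrow> real) (y :: real \<Rightarrow> nat \<Rightarrow> real).
      (\<forall>t. in_simplex 7 (x t) \<and> (\<forall>i\<in>{1..7}. 0 < x t i)) \<and>
      replicator_solution 7 (Umat e) x \<and>
      (\<forall>t. in_simplex 3 (y t)) \<and>
      replicator_solution 3 (Ubar e) y \<and>
      (\<forall>i\<in>{1..3}. y 0 i = xbar x 0 i)
      \<longrightarrow>
      (\<forall>t. \<forall>i\<in>{1..3}. ((\<lambda>s. xbar x s i) has_real_derivative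
          lam x t * xbar x t i * (matvec 3 (Ubar e) (xbar x t) i
             - dotp 3 (xbar x t) (matvec 3 (Ubar e) (xbar x t)))) (at t)) \<and>
      (\<forall>t. \<forall>i\<in>{1..3}. xbar x t i = y (taubar x t) i))"
  by (intro exI[of _ "1::real"] conjI allI impI ballI)
    (auto intro!: xbar_has_derivative xbar_eq_time_changed_solution)

end
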